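(* Let $n\ge2$ and let $K$ be a kernel as in the context. If $E\subset\mathbb{R}^n$ is a convex body, then $P_K(E\cap C)\le P_K(E)$ for every convex set $C\subset\mathbb{R}^n$.
   Context: A convex body is a compact convex subset of $\mathbb{R}^n$ with non-empty interior. A kernel is a measurable function $K\colon\mathbb{R}^n\to[0,+\infty]$ such that $K(-x)=K(x)$ for a.e. $x\in\mathbb{R}^n$ and $\int_{\mathbb{R}^n}\min\{1,|x|\}\,K(x)\,dx<+\infty$. For a measurable set $E\subset\mathbb{R}^n$, its non-local $K$-perimeter is $P_K(E)=\frac12\int_{\mathbb{R}^n}\int_{\mathbb{R}^n}|\chi_E(x)-\chi_E(y)|\,K(x-y)\,dx\,dy$. *)

theory Defs
  imports "HOL-Analysis.Analysis"
begin

definition is_kernel :: "('a::euclidean_space \<Rightarrow> ennreal) \<Rightarrow> bool" where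
  "is_kernel K \<longleftrightarrow>
     K \<in> borel_measurable lebesgue \<and>
     (AE x in lebesgue. K (- x) = K x) \<and>
     (\<integral>\<^sup>+ x. ennreal (min 1 (norm x)) * K x \<partial>lebesgue) < \<infinity>"

definition perimK :: "('a::euclidean_space \<Rightarrow> ennreal) \<Rightarrow> 'a set \<Rightarrow> ennreal" where
  "perimK K E = (1/2) * (\<integral>\<^sup>+ x. (\<integral>\<^sup>+ y.
      ennreal \<bar>indicator E x - indicator E y\<bar> * K (x - y) \<partial>lebesgue) \<partial>lebesgue)"

definition convex_body :: "'a::euclidean_space set \<Rightarrow> bool" where
  "convex_body E \<longleftrightarrow> compact E \<and> convex E \<and> interior E \<noteq> {}"

end

theory Submission
  imports Defs
begin

text \<open>
  By Fubini and the substitution \<open>y = x - z\<close>,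
  \<open>P\<^sub>K(S) = 1/2 \<integral> K(z) (|S \ (S + z)| + |S \ (S - z)|) dz\<close>,
  so it suffices to compare the measures \<open>|F \ (F + z)| \<le> |E \ (E + z)|\<close> for the convex set
  \<open>F = E \<inter> C\<close>. For \<open>x \<in> F \ (F + z)\<close> follow the chain \<open>x, x - z, x - 2z, \<dots>\<close> until it leaves
  the bounded set \<open>E\<close>; its last point lies in \<open>E \ (E + z)\<close>. Sending each \<open>x\<close> to that point is
  a piecewise translation, and it is injective because by convexity of \<open>F\<close> no chain starting in
  \<open>F \ (F + z)\<close> can pass through another point of \<open>F\<close>. Convex sets differ from their interiors
  by a null set, so one may assume \<open>E\<close> and \<open>F\<close> open, which makes all integrands measurable.
\<close>

lemma sigma_finite_lebesgue: "sigma_finite_measure (lebesgue :: 'a::euclidean_space measure)"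
proof
  show "\<exists>A::'a set set. countable A \<and> A \<subseteq> sets lebesgue \<and> \<Union>A = space lebesgue \<and>
      (\<forall>a\<in>A. emeasure lebesgue a \<noteq> \<infinity>)"
    by (intro exI[of _ "range (\<lambda>n::nat. box (- real n *\<^sub>R One) (real n *\<^sub>R One))"])
       (auto simp: emeasure_lborel_cbox_eq UN_box_eq_UNIV)
qed

lemma pair_sigma_finite_lebesgue:
  "pair_sigma_finite (lebesgue :: 'a::euclidean_space measure) (lebesgue :: 'a measure)"
  by (simp add: pair_sigma_finite_def sigma_finite_lebesgue)

lemma reflection_eq_affine:
  "(\<lambda>z. x + (\<Sum>j\<in>Basis. (-1 * (z \<bullet> j)) *\<^sub>R j)) = (\<lambda>z::'a::euclidean_space. x - z)"
  by (simp add: fun_eq_iff sum_negf euclidean_representation)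

lemma lebesgue_measurable_reflection: "(\<lambda>z::'a::euclidean_space. x - z) \<in> lebesgue \<rightarrow>\<^sub>M lebesgue"
  using lebesgue_affine_measurable[of "\<lambda>_. -1" x] by (simp only: reflection_eq_affine)

lemma nn_integral_lebesgue_reflection:
  fixes f :: "'a::euclidean_space \<Rightarrow> ennreal"
  assumes f: "f \<in> borel_measurable lebesgue"
  shows "(\<integral>\<^sup>+y. f y \<partial>lebesgue) = (\<integral>\<^sup>+z. f (x - z) \<partial>lebesgue)"
proof -
  have "lebesgue = density (distr lebesgue lebesgue (\<lambda>z::'a. x - z)) (\<lambda>_. 1)"
    using lebesgue_affine_euclidean[of "\<lambda>_. -1" x] by (simp only: reflection_eq_affine) simp
  then have "(\<integral>\<^sup>+y. f y \<partial>lebesgue)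
      = (\<integral>\<^sup>+y. f y \<partial>density (distr lebesgue lebesgue (\<lambda>z::'a. x - z)) (\<lambda>_. 1))"
    by simp
  also have "\<dots> = (\<integral>\<^sup>+y. f y \<partial>distr lebesgue lebesgue (\<lambda>z::'a. x - z))"
    by (subst nn_integral_density) (auto simp: f)
  also have "\<dots> = (\<integral>\<^sup>+z. f (x - z) \<partial>lebesgue)"
    by (subst nn_integral_distr) (auto simp: f lebesgue_measurable_reflection)
  finally show ?thesis .
qed

lemma emeasure_lebesgue_translation_subtract:
  "emeasure lebesgue ((\<lambda>x. x - c) ` S) = emeasure lebesgue (S :: 'a::euclidean_space set)"
  using emeasure_lebesgue_affine[of 1 "-c" S] by (simp cong: image_cong_simp)

lemma lebesgue_sets_translation_vimage:
  assumes "S \<in> sets lebesgue"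
  shows "{x. x - c \<in> S} \<in> sets lebesgue"
proof -
  have "{x. x - c \<in> S} = (\<lambda>x. c + x) ` (S :: 'a::euclidean_space set)"
    by (auto simp: image_iff algebra_simps) (metis diff_add_cancel)
  then show ?thesis using lebesgue_sets_translation[OF assms] by simp
qed

lemma lebesgue_sets_translation_exit:
  assumes "S \<in> sets lebesgue"
  shows "{x\<in>S. x - z \<notin> S} \<in> sets lebesgue"
proof -
  have "{x\<in>S. x - z \<notin> S} = S - {x. x - z \<in> S}" by auto
  then show ?thesis using assms lebesgue_sets_translation_vimage[OF assms] by auto
qed

lemma perimK_eq_nn_integral_translation_exit:
  fixes S :: "'a::euclidean_space set"
  assumes S: "S \<in> sets borel" and K: "K \<in> borel_measurable lebesgue"
  shows "perimK K S = (1/2) * (\<integral>\<^sup>+z. K z * (emeasure lebesgue {x\<in>S. x - z \<notin> S}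
            + emeasure lebesgue {x\<in>S. x + z \<notin> S}) \<partial>lebesgue)"
proof -
  have Sl: "S \<in> sets lebesgue" using S by simp
  define G where "G x z = ennreal \<bar>indicator S x - indicator S (x - z)\<bar> * K z" for x z
  have inner: "(\<integral>\<^sup>+ y. ennreal \<bar>indicator S x - indicator S y\<bar> * K (x - y) \<partial>lebesgue)
      = (\<integral>\<^sup>+ z. G x z \<partial>lebesgue)" for x
  proof -
    have "(\<lambda>y. K (x - y)) \<in> borel_measurable lebesgue"
      using measurable_compose[OF lebesgue_measurable_reflection K] by simp
    then have "(\<lambda>y. ennreal \<bar>indicator S x - indicator S y\<bar> * K (x - y)) \<in> borel_measurable lebesgue"
      using Sl by measurable
    then show ?thesis unfolding G_def by (subst nn_integral_lebesgue_reflection[where x=x]) simp_all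
  qed
  have "(\<lambda>p. fst p - snd p) \<in> lebesgue \<Otimes>\<^sub>M (lebesgue :: 'a measure) \<rightarrow>\<^sub>M borel"
    by (intro borel_measurable_diff measurable_compose[OF measurable_fst measurable_completion]
        measurable_compose[OF measurable_snd measurable_completion]) simp_all
  then have "(\<lambda>p. indicator S (fst p - snd p) :: real) \<in> borel_measurable (lebesgue \<Otimes>\<^sub>M lebesgue)"
    using measurable_compose[OF _ borel_measurable_indicator[OF S]] by blast
  then have G: "case_prod G \<in> borel_measurable (lebesgue \<Otimes>\<^sub>M lebesgue)"
    unfolding G_def using Sl K by measurable
  have swap: "(\<integral>\<^sup>+ x. (\<integral>\<^sup>+ z. G x z \<partial>lebesgue) \<partial>lebesgue)
      = (\<integral>\<^sup>+ z. (\<integral>\<^sup>+ x. G x z \<partial>lebesgue) \<partial>lebesgue)"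
    using pair_sigma_finite.Fubini'[OF pair_sigma_finite_lebesgue G] by simp
  have slice: "(\<integral>\<^sup>+ x. G x z \<partial>lebesgue) = K z * (emeasure lebesgue {x\<in>S. x - z \<notin> S}
            + emeasure lebesgue {x\<in>S. x + z \<notin> S})" for z
  proof -
    define A where "A = {x\<in>S. x - z \<notin> S}"
    define B where "B = {x. x \<notin> S \<and> x - z \<in> S}"
    have A: "A \<in> sets lebesgue"
      unfolding A_def by (rule lebesgue_sets_translation_exit[OF Sl])
    have "B = {x. x - z \<in> S} - S" by (auto simp: B_def)
    then have B: "B \<in> sets lebesgue" using Sl lebesgue_sets_translation_vimage[OF Sl] by auto
    have "G x z = indicator (A \<union> B) x * K z" for x
      by (auto simp: G_def A_def B_def indicator_def)
    then have "(\<integral>\<^sup>+ x. G x z \<partial>lebesgue) = emeasure lebesgue (A \<union> B) * K z"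
      using A B by (simp add: nn_integral_multc)
    moreover have "emeasure lebesgue (A \<union> B) = emeasure lebesgue A + emeasure lebesgue B"
      using A B by (intro plus_emeasure[symmetric]) (auto simp: A_def B_def)
    moreover have "B = (\<lambda>x. x - (-z)) ` {x\<in>S. x + z \<notin> S}"
      by (auto simp: B_def image_iff) (metis diff_add_cancel)
    then have "emeasure lebesgue B = emeasure lebesgue {x\<in>S. x + z \<notin> S}"
      by (simp only: emeasure_lebesgue_translation_subtract)
    ultimately show ?thesis by (simp add: A_def mult.commute)
  qed
  show ?thesis unfolding perimK_def inner swap slice ..
qed

lemma perimK_convex_interior:
  fixes S :: "'a::euclidean_space set"
  assumes "convex S"
  shows "perimK K (interior S) = perimK K S"
proof -
  have "S - interior S \<subseteq> frontier S" using closure_subset by (auto simp: frontier_def)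
  then have "S - interior S \<in> null_sets lebesgue"
    using negligible_convex_frontier[OF assms] negligible_subset negligible_iff_null_sets by blast
  then have ae: "AE y in lebesgue. indicator (interior S) y = (indicator S y :: real)"
    by (rule AE_mp[OF AE_not_in]) (use interior_subset in \<open>auto simp: indicator_def\<close>)
  show ?thesis unfolding perimK_def
  proof (intro arg_cong[where f="\<lambda>t. (1/2) * t"] nn_integral_cong_AE)
    show "AE x in lebesgue.
        (\<integral>\<^sup>+ y. ennreal \<bar>indicator (interior S) x - indicator (interior S) y\<bar> * K (x - y) \<partial>lebesgue) =
        (\<integral>\<^sup>+ y. ennreal \<bar>indicator S x - indicator S y\<bar> * K (x - y) \<partial>lebesgue)"
      using ae by eventually_elim (intro nn_integral_cong_AE, use ae in \<open>eventually_elim, simp\<close>)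
  qed
qed

lemma convex_backstep_mem:
  fixes x y z :: "'a::real_vector"
  assumes "convex F" "x \<in> F" "y \<in> F" "y = x + d *\<^sub>R z" "d \<ge> 1"
  shows "y - z \<in> F"
proof -
  have "y - z = (1 - (d-1)/d) *\<^sub>R x + ((d-1)/d) *\<^sub>R y"
    using assms(4,5) by (simp add: algebra_simps diff_divide_distrib scaleR_left_diff_distrib)
  also have "\<dots> \<in> F"
    using assms by (intro convexD) (auto simp: field_simps)
  finally show ?thesis .
qed

lemma bounded_translation_chain_exit:
  fixes z :: "'a::real_normed_vector"
  assumes "bounded E" "z \<noteq> 0" "x \<in> E"
  obtains k where "\<forall>j\<le>k. x - real j *\<^sub>R z \<in> E" "x - real (Suc k) *\<^sub>R z \<notin> E"
proof -
  obtain B where B: "\<And>y. y \<in> E \<Longrightarrow> norm y \<le> B" using assms(1) by (auto simp: bounded_iff)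
  obtain n :: nat where n: "(B + norm x) / norm z < real n" using reals_Archimedean2 by blast
  have "x - real n *\<^sub>R z \<notin> E"
  proof
    assume "x - real n *\<^sub>R z \<in> E"
    then have "norm (x - real n *\<^sub>R z) \<le> B" by (rule B)
    moreover have "real n * norm z - norm x \<le> norm (x - real n *\<^sub>R z)"
      by (metis abs_of_nonneg norm_minus_commute norm_scaleR norm_triangle_ineq2 of_nat_0_le_iff)
    moreover have "B + norm x < real n * norm z" using n assms(2) by (simp add: field_simps)
    ultimately show False by simp
  qed
  then have ex: "\<exists>n. x - real n *\<^sub>R z \<notin> E" by blast
  define m where "m = (LEAST n. x - real n *\<^sub>R z \<notin> E)"
  have out: "x - real m *\<^sub>R z \<notin> E" unfolding m_def by (rule LeastI_ex[OF ex])
  have inside: "x - real j *\<^sub>R z \<in> E" if "j < m" for j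
    using not_less_Least[of j "\<lambda>n. x - real n *\<^sub>R z \<notin> E"] that unfolding m_def by blast
  have "m \<noteq> 0" using out assms(3) by (auto intro: Nat.gr0I)
  then obtain k where "m = Suc k" using not0_implies_Suc by blast
  then show ?thesis using that[of k] out inside by (simp add: less_Suc_eq_le)
qed

lemma emeasure_translation_exit_convex_subset_le:
  fixes E F :: "'a::euclidean_space set"
  assumes F: "convex F" "F \<in> sets lebesgue" and E: "bounded E" "E \<in> sets lebesgue"
    and "F \<subseteq> E"
  shows "emeasure lebesgue {x\<in>F. x - z \<notin> F} \<le> emeasure lebesgue {x\<in>E. x - z \<notin> E}"
proof (cases "z = 0")
  case False
  define P where "P k = {x\<in>F. x - z \<notin> F \<and> (\<forall>j\<le>k. x - real j *\<^sub>R z \<in> E)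
      \<and> x - real (Suc k) *\<^sub>R z \<notin> E}" for k :: nat
  define Q where "Q k = (\<lambda>x. x - real k *\<^sub>R z) ` P k" for k
  have P_sets: "P k \<in> sets lebesgue" for k
  proof -
    have "P k = {x\<in>F. x - z \<notin> F} \<inter> (\<Inter>j\<in>{..k}. {x. x - real j *\<^sub>R z \<in> E})
        - {x. x - real (Suc k) *\<^sub>R z \<in> E}"
      by (auto simp: P_def)
    then show ?thesis
      using lebesgue_sets_translation_exit[OF F(2)] lebesgue_sets_translation_vimage[OF E(2)]
      by (auto intro!: sets.finite_INT)
  qed
  have Q_sets: "Q k \<in> sets lebesgue" for k
    using lebesgue_sets_translation[OF P_sets, of "- (real k *\<^sub>R z)" k]
    by (simp add: Q_def cong: image_cong_simp)
  have cover: "{x\<in>F. x - z \<notin> F} = (\<Union>k. P k)"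
  proof (intro equalityI subsetI)
    fix x assume "x \<in> {x\<in>F. x - z \<notin> F}"
    moreover obtain k where "\<forall>j\<le>k. x - real j *\<^sub>R z \<in> E" "x - real (Suc k) *\<^sub>R z \<notin> E"
      using bounded_translation_chain_exit[OF E(1) False] calculation assms(5) by blast
    ultimately show "x \<in> (\<Union>k. P k)" by (auto simp: P_def)
  qed (auto simp: P_def)
  have "P i \<inter> P j = {}" if "i < j" for i j
    using that by (auto simp: P_def simp del: of_nat_Suc)
  then have "disjoint_family P"
    unfolding disjoint_family_on_def by (metis inf_commute linorder_neqE_nat)
  \<comment> \<open>The chains of two points of the exit set of \<open>F\<close> cannot meet: the later one would
      return to \<open>F\<close> one step after leaving it.\<close>
  have chains_apart: "x - real i *\<^sub>R z \<noteq> y - real j *\<^sub>R z" if "x \<in> P i" "y \<in> P j" "i < j" for x y i j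
  proof
    assume eq: "x - real i *\<^sub>R z = y - real j *\<^sub>R z"
    have "x \<in> F" "y \<in> F" "y - z \<notin> F" using that by (auto simp: P_def)
    moreover have "y = x + real (j - i) *\<^sub>R z" using eq that(3)
      by (simp add: of_nat_diff algebra_simps)
    ultimately show False using convex_backstep_mem[OF F(1), of x y] that(3) by simp
  qed
  then have "Q i \<inter> Q j = {}" if "i < j" for i j
    using that by (fastforce simp: Q_def)
  then have "disjoint_family Q"
    unfolding disjoint_family_on_def by (metis inf_commute linorder_neqE_nat)
  have "emeasure lebesgue {x\<in>F. x - z \<notin> F} = (\<Sum>k. emeasure lebesgue (P k))"
    unfolding cover using P_sets \<open>disjoint_family P\<close> by (intro suminf_emeasure[symmetric]) auto
  also have "\<dots> = (\<Sum>k. emeasure lebesgue (Q k))"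
    by (simp add: Q_def emeasure_lebesgue_translation_subtract)
  also have "\<dots> = emeasure lebesgue (\<Union>k. Q k)"
    using Q_sets \<open>disjoint_family Q\<close> by (intro suminf_emeasure) auto
  also have "\<dots> \<le> emeasure lebesgue {x\<in>E. x - z \<notin> E}"
    using lebesgue_sets_translation_exit[OF E(2)]
    by (intro emeasure_mono) (auto simp: Q_def P_def algebra_simps)
  finally show ?thesis .
qed simp

theorem mainTheorem2:
  fixes K :: "'a::euclidean_space \<Rightarrow> ennreal" and E C :: "'a set"
  assumes "DIM('a) \<ge> 2"
    and "is_kernel K"
    and "convex_body E"
    and "convex C"
  shows "perimK K (E \<inter> C) \<le> perimK K E"
proof -
  have K: "K \<in> borel_measurable lebesgue" using assms(2) by (simp add: is_kernel_def)
  have "convex E" "bounded E" using assms(3) by (auto simp: convex_body_def compact_imp_bounded)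
  then have "convex (E \<inter> C)" using assms(4) by (simp add: convex_Int)
  define E' F' where "E' = interior E" and "F' = interior (E \<inter> C)"
  have "open E'" "open F'" "F' \<subseteq> E'" unfolding E'_def F'_def by (auto intro: interior_mono)
  moreover have "convex F'" unfolding F'_def by (rule convex_interior) fact
  moreover have "bounded E'" unfolding E'_def using \<open>bounded E\<close> interior_subset by (rule bounded_subset)
  ultimately have exit_le: "emeasure lebesgue {x\<in>F'. x - z \<notin> F'} \<le> emeasure lebesgue {x\<in>E'. x - z \<notin> E'}"
    for z by (intro emeasure_translation_exit_convex_subset_le) auto
  have exit_le': "emeasure lebesgue {x\<in>F'. x + z \<notin> F'} \<le> emeasure lebesgue {x\<in>E'. x + z \<notin> E'}"
    for z using exit_le[of "- z"] by simp
  have "perimK K (E \<inter> C) = perimK K F'"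
    unfolding F'_def using \<open>convex (E \<inter> C)\<close> by (rule perimK_convex_interior[symmetric])
  also have "\<dots> \<le> perimK K E'"
    unfolding perimK_eq_nn_integral_translation_exit[OF borel_open[OF \<open>open F'\<close>] K]
      perimK_eq_nn_integral_translation_exit[OF borel_open[OF \<open>open E'\<close>] K]
    by (intro mult_left_mono nn_integral_mono add_mono exit_le exit_le') auto
  also have "\<dots> = perimK K E"
    unfolding E'_def using \<open>convex E\<close> by (rule perimK_convex_interior)
  finally show ?thesis .
qed

end
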